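(* Let $X,Y$ be compact metric spaces, and let $A\subseteq X$, $B\subseteq Y$ be closed subsets such that $A$ contains every isolated point of $X$ and $B$ contains every isolated point of $Y$. Let $I(X,A)$ and $I(Y,B)$ be constructed as described in the context (with arbitrary choices of the enumerations). Then every homeomorphism $g:X\to Y$ with $g[A]=B$ extends to a homeomorphism $I(X,A)\to I(Y,B)$. Conversely, if $f:I(X,A)\to I(Y,B)$ is a homeomorphism, then $f[X]=Y$ and $f[A]=B$.
   Context: For a compact metric space $X$ and a closed subset $A\subseteq X$ containing all isolated points of $X$, $I(X,A)\subseteq X\times[0,1]$ is defined as follows: let $(d_n)_{n\in\mathbb{N}}$ (with $\mathbb{N}=\{1,2,\dots\}$) enumerate, with each term repeated infinitely often, a countable dense subset of $A$; set $\widetilde{a}_n=(d_n,\tfrac1n)$ and $I(X,A)=(X\times\{0\})\cup\{\widetilde{a}_1,\widetilde{a}_2,\dots\}$. This is a compact subset of $X\times[0,1]$, and $X$ is identified with $X\times\{0\}$ (so that $f[X]$, $f[A]$ refer to these copies). $I(Y,B)$ is defined analogously from $Y,B$. *)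

theory Defs
  imports "HOL-Analysis.Analysis"
begin

definition isolated_points :: "'a::metric_space set \<Rightarrow> 'a set" where
  "isolated_points X = {x \<in> X. \<not> x islimpt X}"

text \<open>d (indexed by the positive naturals 1,2,...) enumerates, with every term repeated
  infinitely often, a countable dense subset of A. (Countability is automatic for the
  range of a sequence.)\<close>
definition dense_enum :: "'a::metric_space set \<Rightarrow> (nat \<Rightarrow> 'a) \<Rightarrow> bool" where
  "dense_enum A d \<longleftrightarrow>
     d ` {1..} \<subseteq> A \<and> A \<subseteq> closure (d ` {1..}) \<and>
     (\<forall>n\<ge>1. infinite {m. m \<ge> 1 \<and> d m = d n})"

definition I_space :: "'a::metric_space set \<Rightarrow> (nat \<Rightarrow> 'a) \<Rightarrow> ('a \<times> real) set" where
  "I_space X d = (X \<times> {0}) \<union> {(d n, 1 / real n) | n. n \<ge> 1}"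

end

theory Submission
  imports Defs
begin

text \<open>
  The base \<open>X \<times> {0}\<close> of \<open>I(X,A)\<close> is intrinsic: the tail points \<open>(d n, 1/n)\<close> are isolated,
  while every base point is a limit point, either of the base (if it is not isolated in \<open>X\<close>) or of
  the tail (if it lies in \<open>A\<close>, because \<open>d\<close> is dense in \<open>A\<close> and repeats every value infinitely
  often). Likewise \<open>A \<times> {0}\<close> is the set of limit points of the tail, since \<open>A\<close> is closed. Both
  sets are therefore preserved by homeomorphisms.

  Given a homeomorphism \<open>g\<close> with \<open>g[A] = B\<close>, every \<open>d n\<close> is approximated by infinitely
  many \<open>g\<^sup>-\<^sup>1(e m)\<close>, and every \<open>e m\<close> by infinitely many \<open>g(d n)\<close>. A back-and-forth construction
  matches the indices by a bijection \<open>\<phi>\<close> of the positive integers such that \<open>d n\<close> and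
  \<open>g\<^sup>-\<^sup>1(e (\<phi> n))\<close> become arbitrarily close; extending \<open>g\<close> by
  \<open>(d n, 1/n) \<mapsto> (e (\<phi> n), 1/\<phi> n)\<close> then gives the required homeomorphism.
\<close>

lemma dist_Pair_le_add: "dist (a, s) (b, t) \<le> dist a b + dist s t"
  unfolding dist_Pair_Pair by (rule sqrt_sum_squares_le_sum) auto

lemma homeomorphism_islimpt_image:
  assumes hom: "homeomorphism S T f f'" and "U \<subseteq> S" "p \<in> S" "p islimpt U"
  shows "f p islimpt f ` U"
proof -
  have inj: "inj_on f S"
    using hom by (metis homeomorphism_def inj_on_inverseI)
  have "f -` (f ` U - {f p}) \<inter> S = U - {p}"
    using inj \<open>U \<subseteq> S\<close> \<open>p \<in> S\<close> by (auto simp: inj_on_eq_iff)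
  moreover have "continuous_on S f"
    using hom by (simp add: homeomorphism_def)
  ultimately have "f p islimpt f ` U - {f p}"
    using islimpt_image[of p f "f ` U - {f p}" S] \<open>p \<in> S\<close> \<open>p islimpt U\<close>
    by (simp add: islimpt_punctured[symmetric])
  then show ?thesis
    using islimpt_subset by blast
qed

lemma homeomorphism_limit_points_image:
  assumes hom: "homeomorphism S T f f'" and "U \<subseteq> S"
  shows "f ` {p \<in> S. p islimpt U} = {q \<in> T. q islimpt f ` U}"
proof (intro equalityI subsetI)
  fix q assume "q \<in> f ` {p \<in> S. p islimpt U}"
  then show "q \<in> {q \<in> T. q islimpt f ` U}"
    using homeomorphism_islimpt_image[OF hom \<open>U \<subseteq> S\<close>] hom
    by (auto simp: homeomorphism_def)
next
  fix q assume q: "q \<in> {q \<in> T. q islimpt f ` U}"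
  have "f ` U \<subseteq> T" "f' ` f ` U = U" "f' q \<in> S" "f (f' q) = q"
    using hom \<open>U \<subseteq> S\<close> q unfolding homeomorphism_def by (auto simp: image_comp subset_eq)
  then have "f' q islimpt f' ` f ` U"
    using homeomorphism_islimpt_image[OF homeomorphism_symD[OF hom]] q by blast
  then have "f' q \<in> {p \<in> S. p islimpt U}"
    using \<open>f' ` f ` U = U\<close> \<open>f' q \<in> S\<close> by simp
  then show "q \<in> f ` {p \<in> S. p islimpt U}"
    using \<open>f (f' q) = q\<close> by force
qed

lemma filterlim_sequentially_if_left_inverse:
  assumes "\<forall>n\<ge>1. \<psi> (\<phi> n) = (n :: nat)"
  shows "filterlim \<phi> sequentially sequentially"
  unfolding filterlim_at_top eventually_sequentially
proof
  fix M :: nat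
  have "M \<le> \<phi> n" if "n \<ge> Suc (Max (\<psi> ` {..<M}))" for n
  proof (rule ccontr)
    assume "\<not> M \<le> \<phi> n"
    then have "\<psi> (\<phi> n) \<le> Max (\<psi> ` {..<M})"
      by simp
    then show False
      using assms that by simp
  qed
  then show "\<exists>N. \<forall>n\<ge>N. M \<le> \<phi> n" by blast
qed

section \<open>Limit points of \<open>I(X,A)\<close>\<close>

definition I_tail :: "(nat \<Rightarrow> 'a) \<Rightarrow> ('a \<times> real) set" where
  "I_tail d = {(d n, 1 / real n) | n. n \<ge> 1}"

lemma I_space_eq_Un: "I_space X d = X \<times> {0} \<union> I_tail d"
  unfolding I_space_def I_tail_def by auto

lemma I_tail_subset_I_space: "I_tail d \<subseteq> I_space X d"
  unfolding I_space_eq_Un by blast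

lemma base_subset_I_space: "X \<times> {0} \<subseteq> I_space X d"
  unfolding I_space_eq_Un by blast

lemma I_tail_eq_Diff: "I_tail d = I_space X d - X \<times> {0}"
  unfolding I_space_def I_tail_def by auto

lemma I_space_cases:
  assumes "p \<in> I_space X d"
  obtains x where "x \<in> X" "p = (x, 0)" | n where "n \<ge> 1" "p = (d n, 1 / real n)"
  using assms unfolding I_space_def by auto

lemma not_islimpt_I_space_if_positive:
  assumes "snd p > 0"
  shows "\<not> p islimpt I_space X d"
proof
  define U where "U = {q :: 'a \<times> real. snd q > snd p / 2}"
  assume "p islimpt I_space X d"
  moreover have "open U" "p \<in> U"
    using assms unfolding U_def by (auto intro!: open_Collect_less continuous_intros)
  moreover have "U \<inter> I_space X d \<subseteq> (\<lambda>m. (d m, 1 / real m)) ` {1..nat \<lceil>2 / snd p\<rceil>}"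
  proof
    fix q assume "q \<in> U \<inter> I_space X d"
    then obtain m where "m \<ge> 1" "q = (d m, 1 / real m)" "1 / real m > snd p / 2"
      using assms unfolding U_def by (auto elim: I_space_cases)
    moreover from this have "real m < 2 / snd p"
      using assms by (simp add: field_simps)
    ultimately show "q \<in> (\<lambda>m. (d m, 1 / real m)) ` {1..nat \<lceil>2 / snd p\<rceil>}"
      by (auto intro!: imageI) linarith
  qed
  ultimately show False
    unfolding islimpt_eq_acc_point by (meson finite_atLeastAtMost finite_imageI finite_subset)
qed

lemma I_space_limit_point_cases:
  assumes "p \<in> I_space X d" "p islimpt I_space X d"
  obtains x where "x \<in> X" "p = (x, 0)"
  using assms(1)
proof (cases rule: I_space_cases)
  case (2 n)
  then show ?thesis
    using assms(2) not_islimpt_I_space_if_positive[of p X d] by simp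
qed

lemma dense_enum_islimpt_I_tail:
  assumes "dense_enum A d" "x \<in> A"
  shows "(x, 0) islimpt I_tail d"
  unfolding islimpt_approachable
proof (intro allI impI)
  fix \<epsilon> :: real assume "\<epsilon> > 0"
  have "x \<in> closure (d ` {1..})"
    using assms unfolding dense_enum_def by blast
  then obtain y where "y \<in> d ` {1..}" "dist y x < \<epsilon> / 2"
    using \<open>\<epsilon> > 0\<close> unfolding closure_approachable by (meson half_gt_zero)
  then obtain n where n: "n \<ge> 1" "dist (d n) x < \<epsilon> / 2"
    by auto
  have "infinite {m. m \<ge> 1 \<and> d m = d n}"
    using assms(1) n(1) unfolding dense_enum_def by blast
  then obtain m where m: "m \<ge> nat \<lceil>2 / \<epsilon>\<rceil> + 1" "m \<ge> 1" "d m = d n"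
    unfolding infinite_nat_iff_unbounded_le by blast
  then have "2 / \<epsilon> < real m"
    by linarith
  then have "1 / real m < \<epsilon> / 2"
    using \<open>\<epsilon> > 0\<close> m(2) by (simp add: field_simps)
  then have "dist (d m, 1 / real m) (x, 0) < \<epsilon>"
    using dist_Pair_le_add[of "d m" "1 / real m" x 0] n(2) m(3) by simp
  moreover have "(d m, 1 / real m) \<in> I_tail d"
    using m(2) unfolding I_tail_def by blast
  moreover have "(d m, 1 / real m) \<noteq> (x, 0)"
    using m(2) by simp
  ultimately show "\<exists>q\<in>I_tail d. q \<noteq> (x, 0) \<and> dist q (x, 0) < \<epsilon>"
    by blast
qed

lemma limit_points_I_space:
  assumes "isolated_points X \<subseteq> A" "A \<subseteq> X" "dense_enum A d"
  shows "{p \<in> I_space X d. p islimpt I_space X d} = X \<times> {0}"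
proof (intro equalityI subsetI)
  fix p assume "p \<in> {p \<in> I_space X d. p islimpt I_space X d}"
  then show "p \<in> X \<times> {0}"
    by (auto elim: I_space_limit_point_cases)
next
  fix p assume "p \<in> X \<times> {0 :: real}"
  then obtain x where x: "x \<in> X" "p = (x, 0)" by blast
  have "(x, 0) islimpt I_space X d"
  proof (cases "x \<in> A")
    case True
    then show ?thesis
      using islimpt_subset[OF dense_enum_islimpt_I_tail[OF assms(3)] I_tail_subset_I_space] by blast
  next
    case False
    then have "x islimpt X" using assms(1) x(1) unfolding isolated_points_def by blast
    then have "(x, 0) islimpt X \<times> {0 :: real}"
      by (simp add: islimpt_approachable dist_Pair_Pair)
    then show ?thesis using islimpt_subset[OF _ base_subset_I_space] by blast
  qed
  then show "p \<in> {p \<in> I_space X d. p islimpt I_space X d}"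
    using x unfolding I_space_def by auto
qed

lemma limit_points_I_tail:
  assumes "closed A" "A \<subseteq> X" "dense_enum A d"
  shows "{p \<in> I_space X d. p islimpt I_tail d} = A \<times> {0}"
proof (intro equalityI subsetI)
  fix p assume p: "p \<in> {p \<in> I_space X d. p islimpt I_tail d}"
  then have "p islimpt I_space X d"
    using islimpt_subset[OF _ I_tail_subset_I_space] by blast
  with p obtain x where x: "p = (x, 0)"
    by (auto elim: I_space_limit_point_cases)
  have "x \<in> closure A"
    unfolding closure_approachable
  proof (intro allI impI)
    fix \<epsilon> :: real assume "\<epsilon> > 0"
    then obtain n where "n \<ge> 1" "dist (d n, 1 / real n) (x, 0) < \<epsilon>"
      using p x unfolding islimpt_approachable I_tail_def by fastforce
    then show "\<exists>y\<in>A. dist y x < \<epsilon>"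
      using assms(3) dist_fst_le[of "(d n, 1 / real n)" "(x, 0)"] unfolding dense_enum_def by force
  qed
  then show "p \<in> A \<times> {0}" using assms(1) x by simp
next
  fix p assume "p \<in> A \<times> {0 :: real}"
  then show "p \<in> {p \<in> I_space X d. p islimpt I_tail d}"
    using assms(2) dense_enum_islimpt_I_tail[OF assms(3)] unfolding I_space_def by auto
qed

lemma homeomorphism_I_space_base:
  assumes "closed A" "A \<subseteq> X" "isolated_points X \<subseteq> A" "dense_enum A d"
    and "closed B" "B \<subseteq> Y" "isolated_points Y \<subseteq> B" "dense_enum B e"
    and hom: "homeomorphism (I_space X d) (I_space Y e) f f'"
  shows "f ` (X \<times> {0}) = Y \<times> {0}" "f ` (A \<times> {0}) = B \<times> {0}"
proof -
  have onto: "f ` I_space X d = I_space Y e" and inj: "inj_on f (I_space X d)"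
    using hom by (auto simp: homeomorphism_def intro: inj_on_inverseI)
  show base: "f ` (X \<times> {0}) = Y \<times> {0}"
    using homeomorphism_limit_points_image[OF hom order_refl] onto
    by (simp add: limit_points_I_space[OF assms(3,2,4)] limit_points_I_space[OF assms(7,6,8)])
  have "f ` I_tail d = I_tail e"
    using inj_on_image_set_diff[OF inj Diff_subset base_subset_I_space] onto base
    by (simp add: I_tail_eq_Diff[of d X] I_tail_eq_Diff[of e Y])
  then show "f ` (A \<times> {0}) = B \<times> {0}"
    using homeomorphism_limit_points_image[OF hom I_tail_subset_I_space] onto
    by (simp add: limit_points_I_tail[OF assms(1,2,4)] limit_points_I_tail[OF assms(5,6,8)])
qed

section \<open>The back-and-forth matching\<close>

definition finite_matching :: "(nat \<times> nat) set \<Rightarrow> bool" where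
  "finite_matching P \<longleftrightarrow>
     finite P \<and> P \<subseteq> {1..} \<times> {1..} \<and> (\<forall>a b a' b'. (a, b) \<in> P \<longrightarrow> (a', b') \<in> P \<longrightarrow> a = a' \<longleftrightarrow> b = b')"

lemma finite_matching_converse [simp]: "finite_matching (P\<inverse>) \<longleftrightarrow> finite_matching P"
  unfolding finite_matching_def by (simp add: subset_iff) blast

definition often_close :: "(nat \<Rightarrow> nat \<Rightarrow> real) \<Rightarrow> bool" where
  "often_close c \<longleftrightarrow> (\<forall>n\<ge>1. \<forall>\<epsilon>>0. infinite {m. m \<ge> 1 \<and> c n m < \<epsilon>})"

text \<open>
  The least unmatched \<open>n\<close> gets an unmatched partner of cost below \<open>\<epsilon>\<close>; one exists as long as
  \<open>P\<close> is finite and \<open>n\<close> has infinitely many such partners.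
\<close>

definition match_forth :: "(nat \<Rightarrow> nat \<Rightarrow> real) \<Rightarrow> real \<Rightarrow> (nat \<times> nat) set \<Rightarrow> (nat \<times> nat) set" where
  "match_forth c \<epsilon> P =
     (let n = LEAST n. n \<ge> 1 \<and> n \<notin> Domain P in insert (n, SOME m. m \<ge> 1 \<and> m \<notin> Range P \<and> c n m < \<epsilon>) P)"

definition match_back :: "(nat \<Rightarrow> nat \<Rightarrow> real) \<Rightarrow> real \<Rightarrow> (nat \<times> nat) set \<Rightarrow> (nat \<times> nat) set" where
  "match_back c \<epsilon> P = (match_forth (\<lambda>m n. c n m) \<epsilon> (P\<inverse>))\<inverse>"

lemma match_forth:
  assumes "often_close c" "finite_matching P" "\<epsilon> > 0"
  shows "finite_matching (match_forth c \<epsilon> P)" "P \<subseteq> match_forth c \<epsilon> P"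
    "\<forall>(n, m) \<in> match_forth c \<epsilon> P - P. c n m < \<epsilon>"
    "{1..k} \<subseteq> Domain P \<Longrightarrow> {1..Suc k} \<subseteq> Domain (match_forth c \<epsilon> P)"
proof -
  define n where "n = (LEAST n. n \<ge> 1 \<and> n \<notin> Domain P)"
  define m where "m = (SOME m. m \<ge> 1 \<and> m \<notin> Range P \<and> c n m < \<epsilon>)"
  have eq: "match_forth c \<epsilon> P = insert (n, m) P"
    unfolding match_forth_def n_def m_def Let_def ..
  have fin: "finite (Domain P)" "finite (Range P)"
    using assms(2) unfolding finite_matching_def by (auto intro: finite_Domain finite_Range)
  then obtain N where "Domain P \<subseteq> {..<N}"
    using finite_nat_bounded by blast
  then have "\<exists>n. n \<ge> 1 \<and> n \<notin> Domain P"
    by (intro exI[of _ "max N 1"]) auto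
  then have n: "n \<ge> 1 \<and> n \<notin> Domain P"
    unfolding n_def by (rule LeastI_ex)
  have n_least: "n \<le> j" if "j \<ge> 1" "j \<notin> Domain P" for j
    unfolding n_def using that by (simp add: Least_le)
  have "infinite ({m. m \<ge> 1 \<and> c n m < \<epsilon>} - Range P)"
    using assms(1,3) n(1) fin(2) unfolding often_close_def by (simp add: Diff_infinite_finite)
  then have "\<exists>m. m \<ge> 1 \<and> m \<notin> Range P \<and> c n m < \<epsilon>"
    using infinite_imp_nonempty by blast
  then have m: "m \<ge> 1" "m \<notin> Range P" "c n m < \<epsilon>"
    unfolding m_def by (metis (mono_tags, lifting) someI_ex)+
  show "finite_matching (match_forth c \<epsilon> P)"
    using assms(2) n m unfolding eq finite_matching_def by (force simp: Domain_iff Range_iff)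
  show "P \<subseteq> match_forth c \<epsilon> P" "\<forall>(n, m) \<in> match_forth c \<epsilon> P - P. c n m < \<epsilon>"
    using m(3) unfolding eq by auto
  assume dom: "{1..k} \<subseteq> Domain P"
  have "Suc k \<in> Domain (insert (n, m) P)"
  proof (cases "Suc k \<in> Domain P")
    case False
    then have "n = Suc k"
      using n n_least[of "Suc k"] dom by (cases "n \<le> k") auto
    then show ?thesis by blast
  qed blast
  then show "{1..Suc k} \<subseteq> Domain (match_forth c \<epsilon> P)"
    using dom atLeastAtMostSuc_conv[of 1 k] unfolding eq by auto
qed

lemma match_back:
  assumes "often_close (\<lambda>m n. c n m)" "finite_matching P" "\<epsilon> > 0"
  shows "finite_matching (match_back c \<epsilon> P)" "P \<subseteq> match_back c \<epsilon> P"
    "\<forall>(n, m) \<in> match_back c \<epsilon> P - P. c n m < \<epsilon>"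
    "{1..k} \<subseteq> Range P \<Longrightarrow> {1..Suc k} \<subseteq> Range (match_back c \<epsilon> P)"
  using match_forth[of "\<lambda>m n. c n m" "P\<inverse>" \<epsilon>] assms unfolding match_back_def by auto

fun matching_stage :: "(nat \<Rightarrow> nat \<Rightarrow> real) \<Rightarrow> nat \<Rightarrow> (nat \<times> nat) set" where
  "matching_stage c 0 = {}"
| "matching_stage c (Suc k) =
     match_back c (1 / Suc k) (match_forth c (1 / Suc k) (matching_stage c k))"

definition matching_limit :: "(nat \<Rightarrow> nat \<Rightarrow> real) \<Rightarrow> (nat \<times> nat) set" where
  "matching_limit c = (\<Union>k. matching_stage c k)"

context
  fixes c :: "nat \<Rightarrow> nat \<Rightarrow> real"
  assumes close: "often_close c" and close_transposed: "often_close (\<lambda>m n. c n m)"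
begin

lemma matching_stage_invariant:
  "finite_matching (matching_stage c k) \<and>
   {1..k} \<subseteq> Domain (matching_stage c k) \<and> {1..k} \<subseteq> Range (matching_stage c k)"
proof (induction k)
  case 0
  then show ?case by (simp add: finite_matching_def)
next
  case (Suc k)
  let ?P = "match_forth c (1 / Suc k) (matching_stage c k)"
  note forth = match_forth[OF close, of "matching_stage c k" "1 / Suc k"]
  have P: "finite_matching ?P" "{1..Suc k} \<subseteq> Domain ?P" "{1..k} \<subseteq> Range ?P"
    using forth(1,2,4) Suc.IH Range_mono[OF forth(2)] by auto
  note backward = match_back[OF close_transposed P(1), of "1 / Suc k"]
  show ?case
    using P(2,3) backward(1,4) Domain_mono[OF backward(2)] by auto
qed

lemma matching_stage_Suc:
  "matching_stage c k \<subseteq> matching_stage c (Suc k)"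
  "\<forall>(n, m) \<in> matching_stage c (Suc k) - matching_stage c k. c n m < 1 / Suc k"
proof -
  have pos: "1 / Suc k > 0"
    by simp
  note forth = match_forth[OF close conjunct1[OF matching_stage_invariant[of k]] pos]
  note backward = match_back[OF close_transposed forth(1) pos]
  show "matching_stage c k \<subseteq> matching_stage c (Suc k)"
    using forth(2) backward(2) by simp
  show "\<forall>(n, m) \<in> matching_stage c (Suc k) - matching_stage c k. c n m < 1 / Suc k"
    using forth(3) backward(3) by auto
qed

lemma matching_stage_mono: "k \<le> j \<Longrightarrow> matching_stage c k \<subseteq> matching_stage c j"
  by (rule lift_Suc_mono_le[of "matching_stage c"]) (use matching_stage_Suc(1) in auto)

lemma matching_stage_late:
  "(n, m) \<in> matching_stage c j - matching_stage c k \<Longrightarrow> c n m < 1 / Suc k"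
proof (induction j)
  case (Suc j)
  show ?case
  proof (cases "(n, m) \<in> matching_stage c j")
    case True
    then show ?thesis using Suc by blast
  next
    case False
    then have "c n m < 1 / Suc j"
      using matching_stage_Suc(2) Suc.prems by blast
    moreover have "k \<le> j"
      using Suc.prems matching_stage_mono[of "Suc j" k] by (meson Diff_iff not_less_eq_eq subsetD)
    moreover have "1 / real (Suc j) \<le> 1 / Suc k"
      using \<open>k \<le> j\<close> by (intro divide_left_mono) auto
    ultimately show ?thesis
      by linarith
  qed
qed simp

lemma matching_limit_functional:
  "(a, b) \<in> matching_limit c \<Longrightarrow> (a', b') \<in> matching_limit c \<Longrightarrow> a = a' \<longleftrightarrow> b = b'"
proof -
  assume "(a, b) \<in> matching_limit c" "(a', b') \<in> matching_limit c"
  then obtain k k' where "(a, b) \<in> matching_stage c k" "(a', b') \<in> matching_stage c k'"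
    unfolding matching_limit_def by blast
  then have "(a, b) \<in> matching_stage c (max k k')" "(a', b') \<in> matching_stage c (max k k')"
    using matching_stage_mono[of k "max k k'"] matching_stage_mono[of k' "max k k'"] by auto
  then show ?thesis
    using matching_stage_invariant[of "max k k'"] unfolding finite_matching_def by blast
qed

lemma matching_limit_total:
  assumes "n \<ge> 1"
  shows "n \<in> Domain (matching_limit c)" "n \<in> Range (matching_limit c)"
proof -
  have "n \<in> Domain (matching_stage c n) \<and> n \<in> Range (matching_stage c n)"
    using matching_stage_invariant[of n] assms by auto
  then show "n \<in> Domain (matching_limit c)" "n \<in> Range (matching_limit c)"
    unfolding matching_limit_def by blast+
qed

lemma matching_limit_positive: "matching_limit c \<subseteq> {1..} \<times> {1..}"
  using matching_stage_invariant unfolding matching_limit_def finite_matching_def by blast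

text \<open>Pairs outside the finite stage \<open>k\<close> were added later, at cost below \<open>1 / (k + 1)\<close>.\<close>

lemma matching_limit_close:
  assumes "\<epsilon> > 0"
  shows "\<forall>\<^sub>F N in sequentially. \<forall>(n, m) \<in> matching_limit c. N \<le> n \<or> N \<le> m \<longrightarrow> c n m < \<epsilon>"
proof -
  obtain k where k: "inverse (Suc k) < \<epsilon>"
    using reals_Archimedean[OF assms] by blast
  have "finite (fst ` matching_stage c k \<union> snd ` matching_stage c k)"
    using matching_stage_invariant unfolding finite_matching_def by blast
  then obtain N0 where N0: "fst ` matching_stage c k \<union> snd ` matching_stage c k \<subseteq> {..<N0}"
    using finite_nat_bounded by blast
  have close: "c n m < \<epsilon>" if nm: "(n, m) \<in> matching_limit c" "N0 \<le> n \<or> N0 \<le> m" for n m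
  proof -
    obtain j where "(n, m) \<in> matching_stage c j"
      using nm(1) unfolding matching_limit_def by blast
    moreover have "(n, m) \<notin> matching_stage c k"
      using N0 nm(2) by (force simp: subset_iff)
    ultimately show ?thesis
      using matching_stage_late[of n m j k] k by (simp add: inverse_eq_divide)
  qed
  show ?thesis
    unfolding eventually_sequentially
  proof (intro exI[of _ N0] allI impI ballI)
    fix N p assume "N0 \<le> N" "p \<in> matching_limit c"
    then show "case p of (n, m) \<Rightarrow> N \<le> n \<or> N \<le> m \<longrightarrow> c n m < \<epsilon>"
      using close by (cases p) auto
  qed
qed

lemma back_and_forth:
  obtains \<phi> \<psi> where "\<forall>n\<ge>1. \<phi> n \<ge> 1 \<and> \<psi> (\<phi> n) = n" "\<forall>m\<ge>1. \<psi> m \<ge> 1 \<and> \<phi> (\<psi> m) = m"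
    "\<forall>\<epsilon>>0. \<forall>\<^sub>F n in sequentially. c n (\<phi> n) < \<epsilon>"
    "\<forall>\<epsilon>>0. \<forall>\<^sub>F m in sequentially. c (\<psi> m) m < \<epsilon>"
proof
  define \<phi> where "\<phi> n = (SOME m. (n, m) \<in> matching_limit c)" for n
  define \<psi> where "\<psi> m = (SOME n. (n, m) \<in> matching_limit c)" for m
  have \<phi>: "(n, \<phi> n) \<in> matching_limit c" if "n \<ge> 1" for n
    unfolding \<phi>_def using matching_limit_total(1)[OF that] by (auto intro: someI)
  have \<psi>: "(\<psi> m, m) \<in> matching_limit c" if "m \<ge> 1" for m
    unfolding \<psi>_def using matching_limit_total(2)[OF that] by (auto intro: someI)
  show "\<forall>n\<ge>1. \<phi> n \<ge> 1 \<and> \<psi> (\<phi> n) = n"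
  proof (intro allI impI conjI)
    fix n :: nat assume "n \<ge> 1"
    show "\<phi> n \<ge> 1"
      using matching_limit_positive \<phi>[OF \<open>n \<ge> 1\<close>] by auto
    then show "\<psi> (\<phi> n) = n"
      using matching_limit_functional[OF \<psi> \<phi>[OF \<open>n \<ge> 1\<close>]] by simp
  qed
  show "\<forall>m\<ge>1. \<psi> m \<ge> 1 \<and> \<phi> (\<psi> m) = m"
  proof (intro allI impI conjI)
    fix m :: nat assume "m \<ge> 1"
    show "\<psi> m \<ge> 1"
      using matching_limit_positive \<psi>[OF \<open>m \<ge> 1\<close>] by auto
    then show "\<phi> (\<psi> m) = m"
      using matching_limit_functional[OF \<psi>[OF \<open>m \<ge> 1\<close>] \<phi>[of "\<psi> m"]] by simp
  qed
  show "\<forall>\<epsilon>>0. \<forall>\<^sub>F n in sequentially. c n (\<phi> n) < \<epsilon>"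
  proof (intro allI impI)
    fix \<epsilon> :: real assume "\<epsilon> > 0"
    from matching_limit_close[OF this] eventually_ge_at_top[of "1 :: nat"]
    show "\<forall>\<^sub>F n in sequentially. c n (\<phi> n) < \<epsilon>"
    proof eventually_elim
      case (elim n)
      then show ?case using \<phi>[OF elim(2)] by auto
    qed
  qed
  show "\<forall>\<epsilon>>0. \<forall>\<^sub>F m in sequentially. c (\<psi> m) m < \<epsilon>"
  proof (intro allI impI)
    fix \<epsilon> :: real assume "\<epsilon> > 0"
    from matching_limit_close[OF this] eventually_ge_at_top[of "1 :: nat"]
    show "\<forall>\<^sub>F m in sequentially. c (\<psi> m) m < \<epsilon>"
    proof eventually_elim
      case (elim m)
      then show ?case using \<psi>[OF elim(2)] by auto
    qed
  qed
qed

end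

section \<open>Extending a homeomorphism\<close>

lemma often_close_dense_enum:
  assumes hom: "homeomorphism X Y g g'" and "g ` A = B" "A \<subseteq> X" "dense_enum A d" "dense_enum B e"
  shows "often_close (\<lambda>n m. dist (d n) (g' (e m)) + dist (e m) (g (d n)))"
  unfolding often_close_def
proof (intro allI impI)
  fix n :: nat and \<epsilon> :: real assume "n \<ge> 1" "\<epsilon> > 0"
  have "B \<subseteq> Y"
    using hom assms(2,3) unfolding homeomorphism_def by blast
  have "g (d n) \<in> B" "g' (g (d n)) = d n"
    using assms \<open>n \<ge> 1\<close> unfolding dense_enum_def homeomorphism_def by auto
  have "continuous_on Y g'"
    using hom by (simp add: homeomorphism_def)
  then have "\<exists>\<delta>>0. \<forall>y\<in>Y. dist y (g (d n)) < \<delta> \<longrightarrow> dist (g' y) (g' (g (d n))) < \<epsilon> / 2"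
    using \<open>g (d n) \<in> B\<close> \<open>B \<subseteq> Y\<close> half_gt_zero[OF \<open>\<epsilon> > 0\<close>]
    unfolding continuous_on_iff by blast
  then obtain \<delta> where "\<delta> > 0" and \<delta>: "\<forall>y\<in>Y. dist y (g (d n)) < \<delta> \<longrightarrow> dist (g' y) (d n) < \<epsilon> / 2"
    using \<open>g' (g (d n)) = d n\<close> by auto
  have "g (d n) \<in> closure (e ` {1..})"
    using assms(5) \<open>g (d n) \<in> B\<close> unfolding dense_enum_def by blast
  moreover have "min \<delta> (\<epsilon> / 2) > 0"
    using \<open>\<delta> > 0\<close> \<open>\<epsilon> > 0\<close> by simp
  ultimately obtain m0 where m0: "m0 \<ge> 1" "dist (e m0) (g (d n)) < min \<delta> (\<epsilon> / 2)"
    unfolding closure_approachable by blast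
  have "e m0 \<in> Y"
    using assms(5) m0(1) \<open>B \<subseteq> Y\<close> unfolding dense_enum_def by blast
  then have "dist (d n) (g' (e m0)) < \<epsilon> / 2"
    using \<delta> m0(2) by (simp add: dist_commute)
  then have small: "dist (d n) (g' (e m0)) + dist (e m0) (g (d n)) < \<epsilon>"
    using m0(2) by linarith
  have "infinite {m. m \<ge> 1 \<and> e m = e m0}"
    using assms(5) m0(1) unfolding dense_enum_def by blast
  then show "infinite {m. m \<ge> 1 \<and> dist (d n) (g' (e m)) + dist (e m) (g (d n)) < \<epsilon>}"
    by (rule infinite_super[rotated]) (use small in auto)
qed

definition tail_index :: "'a \<times> real \<Rightarrow> nat" where
  "tail_index p = nat \<lfloor>1 / snd p\<rfloor>"

lemma tail_index [simp]: "n \<ge> 1 \<Longrightarrow> tail_index (a, 1 / real n) = n"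
  by (simp add: tail_index_def)

lemma eventually_at_within_I_tail:
  "\<forall>\<^sub>F q in at p within I_tail d. tail_index q \<ge> 1 \<and> q = (d (tail_index q), 1 / real (tail_index q))"
proof -
  have "\<forall>\<^sub>F q in at p within I_tail d. q \<in> I_tail d"
    by (simp add: eventually_at_filter)
  then show ?thesis
    by eventually_elim (auto simp: I_tail_def)
qed

lemma filterlim_tail_index: "filterlim tail_index sequentially (at (x, 0) within I_tail d)"
  unfolding filterlim_at_top
proof
  fix M :: nat
  have "((\<lambda>q. snd q) \<longlongrightarrow> 0) (at (x, 0) within I_tail d)"
    using tendsto_snd[OF tendsto_ident_at[of "(x, 0)" "I_tail d"]] by simp
  then have "\<forall>\<^sub>F q in at (x, 0) within I_tail d. snd q < 1 / Suc M"
    using order_tendstoD(2) by force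
  with eventually_at_within_I_tail show "\<forall>\<^sub>F q in at (x, 0) within I_tail d. M \<le> tail_index q"
  proof eventually_elim
    case (elim q)
    then have "1 / real (tail_index q) < 1 / Suc M"
      by (metis snd_conv)
    then show ?case
      using elim by (simp add: field_simps)
  qed
qed

definition I_extension :: "('a \<Rightarrow> 'b) \<Rightarrow> (nat \<Rightarrow> nat) \<Rightarrow> (nat \<Rightarrow> 'b) \<Rightarrow> 'a \<times> real \<Rightarrow> 'b \<times> real" where
  "I_extension g \<phi> e p =
     (if snd p = 0 then (g (fst p), 0) else (e (\<phi> (tail_index p)), 1 / real (\<phi> (tail_index p))))"

lemma I_extension_base [simp]: "I_extension g \<phi> e (x, 0) = (g x, 0)"
  by (simp add: I_extension_def)

lemma I_extension_tail [simp]: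
  "n \<ge> 1 \<Longrightarrow> I_extension g \<phi> e (a, 1 / real n) = (e (\<phi> n), 1 / real (\<phi> n))"
  by (simp add: I_extension_def)

lemma I_extension_tendsto_tail:
  assumes g: "continuous_on X g" "x0 \<in> X"
    and x: "\<forall>n\<ge>1. x n \<in> X \<and> g (x n) = e (\<phi> n)" "(\<lambda>n. dist (d n) (x n)) \<longlonglongrightarrow> 0"
    and \<phi>: "filterlim \<phi> sequentially sequentially"
  shows "(I_extension g \<phi> e \<longlongrightarrow> (g x0, 0)) (at (x0, 0) within I_tail d)"
proof -
  let ?F = "at (x0, 0) within I_tail d"
  let ?n = "tail_index :: 'a \<times> real \<Rightarrow> nat"
  note tail = eventually_at_within_I_tail[where p = "(x0, 0)" and d = d]
  have "((\<lambda>q. fst q) \<longlongrightarrow> x0) ?F"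
    using tendsto_fst[OF tendsto_ident_at[of "(x0, 0)" "I_tail d"]] by simp
  moreover have "\<forall>\<^sub>F q in ?F. fst q = d (?n q)"
    using tail by eventually_elim auto
  ultimately have "((\<lambda>q. d (?n q)) \<longlongrightarrow> x0) ?F"
    by (rule Lim_transform_eventually)
  then have "((\<lambda>q. dist (d (?n q)) x0) \<longlongrightarrow> 0) ?F"
    by (rule tendsto_dist_iff[THEN iffD1])
  with filterlim_compose[OF x(2) filterlim_tail_index]
  have "((\<lambda>q. dist (d (?n q)) (x (?n q)) + dist (d (?n q)) x0) \<longlongrightarrow> 0) ?F"
    by (rule tendsto_add_zero)
  then have "((\<lambda>q. dist (x (?n q)) x0) \<longlongrightarrow> 0) ?F"
    by (rule tendsto_sandwich[rotated 2, OF tendsto_const]) (simp_all add: dist_triangle3)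
  then have "((\<lambda>q. x (?n q)) \<longlongrightarrow> x0) ?F"
    by (rule tendsto_dist_iff[THEN iffD2])
  moreover have x_tail: "\<forall>\<^sub>F q in ?F. x (?n q) \<in> X \<and> g (x (?n q)) = e (\<phi> (?n q))"
    using tail by eventually_elim (use x(1) in blast)
  ultimately have "((\<lambda>q. g (x (?n q))) \<longlongrightarrow> g x0) ?F"
    by (intro continuous_on_tendsto_compose[OF g(1) _ g(2)]) (auto elim: eventually_mono)
  moreover have "\<forall>\<^sub>F q in ?F. g (x (?n q)) = e (\<phi> (?n q))"
    using x_tail by eventually_elim blast
  ultimately have "((\<lambda>q. e (\<phi> (?n q))) \<longlongrightarrow> g x0) ?F"
    by (rule Lim_transform_eventually)
  moreover have "((\<lambda>q. 1 / real (\<phi> (?n q))) \<longlongrightarrow> 0) ?F"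
    using filterlim_compose[OF lim_inverse_n' filterlim_compose[OF \<phi> filterlim_tail_index]] .
  ultimately have "((\<lambda>q. (e (\<phi> (?n q)), 1 / real (\<phi> (?n q)))) \<longlongrightarrow> (g x0, 0)) ?F"
    by (rule tendsto_Pair)
  moreover have "\<forall>\<^sub>F q in ?F. (e (\<phi> (?n q)), 1 / real (\<phi> (?n q))) = I_extension g \<phi> e q"
    using tail by eventually_elim (metis I_extension_tail)
  ultimately show ?thesis
    by (rule Lim_transform_eventually)
qed

lemma I_extension_continuous:
  assumes g: "continuous_on X g"
    and x: "\<forall>n\<ge>1. x n \<in> X \<and> g (x n) = e (\<phi> n)" "(\<lambda>n. dist (d n) (x n)) \<longlonglongrightarrow> 0"
    and \<phi>: "filterlim \<phi> sequentially sequentially"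
  shows "continuous_on (I_space X d) (I_extension g \<phi> e)"
  unfolding continuous_on_def
proof
  fix p assume "p \<in> I_space X d"
  then show "(I_extension g \<phi> e \<longlongrightarrow> I_extension g \<phi> e p) (at p within I_space X d)"
  proof (cases rule: I_space_cases)
    case (1 x0)
    have "continuous_on (X \<times> {0}) (\<lambda>q. (g (fst q), 0 :: real))"
      by (intro continuous_intros continuous_on_compose2[OF g]) auto
    then have "continuous_on (X \<times> {0}) (I_extension g \<phi> e)"
      by (rule continuous_on_eq) auto
    then have "(I_extension g \<phi> e \<longlongrightarrow> (g x0, 0)) (at (x0, 0) within X \<times> {0})"
      using 1 by (simp add: continuous_on_def)
    then show ?thesis
      using I_extension_tendsto_tail[OF g 1(1) x \<phi>] 1
      by (simp add: I_space_eq_Un Lim_within_Un)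
  next
    case (2 n)
    then have "\<not> p islimpt I_space X d"
      using not_islimpt_I_space_if_positive[of p] by simp
    then show ?thesis
      by (simp add: trivial_limit_within[symmetric])
  qed
qed

lemma I_extension_image:
  assumes "g ` X \<subseteq> Y" "\<forall>n\<ge>1. \<phi> n \<ge> 1"
  shows "I_extension g \<phi> e ` I_space X d \<subseteq> I_space Y e"
  using assms by (auto elim!: I_space_cases simp: I_space_def)

lemma I_extension_inverse:
  assumes "\<forall>x\<in>X. g' (g x) = x" "\<forall>n\<ge>1. \<phi> n \<ge> 1 \<and> \<psi> (\<phi> n) = n"
  shows "\<forall>p\<in>I_space X d. I_extension g' \<psi> d (I_extension g \<phi> e p) = p"
  using assms by (auto elim!: I_space_cases)

lemma I_extension_homeomorphism:
  assumes hom: "homeomorphism X Y g g'"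
    and "\<forall>n\<ge>1. d n \<in> X" "\<forall>m\<ge>1. e m \<in> Y"
    and \<phi>\<psi>: "\<forall>n\<ge>1. \<phi> n \<ge> 1 \<and> \<psi> (\<phi> n) = n" "\<forall>m\<ge>1. \<psi> m \<ge> 1 \<and> \<phi> (\<psi> m) = m"
    and "(\<lambda>n. dist (d n) (g' (e (\<phi> n)))) \<longlonglongrightarrow> 0" "(\<lambda>m. dist (e m) (g (d (\<psi> m)))) \<longlonglongrightarrow> 0"
  shows "homeomorphism (I_space X d) (I_space Y e) (I_extension g \<phi> e) (I_extension g' \<psi> d)"
proof (rule homeomorphismI)
  have g: "continuous_on X g" "g ` X = Y" "\<forall>x\<in>X. g' (g x) = x"
    and g': "continuous_on Y g'" "g' ` Y = X" "\<forall>y\<in>Y. g (g' y) = y"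
    using hom unfolding homeomorphism_def by auto
  show "continuous_on (I_space X d) (I_extension g \<phi> e)"
    using assms(3,6) \<phi>\<psi>(1) g' filterlim_sequentially_if_left_inverse[of \<psi> \<phi>]
    by (intro I_extension_continuous[OF g(1), where x = "\<lambda>n. g' (e (\<phi> n))"]) auto
  show "continuous_on (I_space Y e) (I_extension g' \<psi> d)"
    using assms(2,7) \<phi>\<psi>(2) g filterlim_sequentially_if_left_inverse[of \<phi> \<psi>]
    by (intro I_extension_continuous[OF g'(1), where x = "\<lambda>m. g (d (\<psi> m))"]) auto
  show "I_extension g \<phi> e ` I_space X d \<subseteq> I_space Y e"
    by (rule I_extension_image) (use g(2) \<phi>\<psi>(1) in auto)
  show "I_extension g' \<psi> d ` I_space Y e \<subseteq> I_space X d"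
    by (rule I_extension_image) (use g'(2) \<phi>\<psi>(2) in auto)
  show "\<And>p. p \<in> I_space X d \<Longrightarrow> I_extension g' \<psi> d (I_extension g \<phi> e p) = p"
    using I_extension_inverse[where g = g and g' = g' and \<phi> = \<phi> and \<psi> = \<psi>] g(3) \<phi>\<psi>(1) by blast
  show "\<And>p. p \<in> I_space Y e \<Longrightarrow> I_extension g \<phi> e (I_extension g' \<psi> d p) = p"
    using I_extension_inverse[where g = g' and g' = g and \<phi> = \<psi> and \<psi> = \<phi>] g'(3) \<phi>\<psi>(2) by blast
qed

lemma homeomorphism_extends_to_I_space:
  assumes hom: "homeomorphism X Y g g'" and gA: "g ` A = B" and "A \<subseteq> X" "B \<subseteq> Y"
    and d: "dense_enum A d" and e: "dense_enum B e"
  obtains F F' where "homeomorphism (I_space X d) (I_space Y e) F F'" "\<forall>x\<in>X. F (x, 0) = (g x, 0)"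
proof -
  define c where "c n m = dist (d n) (g' (e m)) + dist (e m) (g (d n))" for n m
  have "g' ` B = (\<lambda>x. g' (g x)) ` A"
    by (simp add: gA[symmetric] image_image)
  also have "\<dots> = (\<lambda>x. x) ` A"
    using hom \<open>A \<subseteq> X\<close> unfolding homeomorphism_def by (intro image_cong) auto
  finally have "g' ` B = A"
    by simp
  have "often_close c"
    using often_close_dense_enum[OF hom gA \<open>A \<subseteq> X\<close> d e] unfolding c_def .
  moreover have "often_close (\<lambda>m n. c n m)"
    using often_close_dense_enum[OF homeomorphism_symD[OF hom] \<open>g' ` B = A\<close> \<open>B \<subseteq> Y\<close> e d]
    unfolding c_def by (simp add: add.commute)
  ultimately obtain \<phi> \<psi> where \<phi>\<psi>: "\<forall>n\<ge>1. \<phi> n \<ge> 1 \<and> \<psi> (\<phi> n) = n" "\<forall>m\<ge>1. \<psi> m \<ge> 1 \<and> \<phi> (\<psi> m) = m"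
    and close: "\<forall>\<epsilon>>0. \<forall>\<^sub>F n in sequentially. c n (\<phi> n) < \<epsilon>" "\<forall>\<epsilon>>0. \<forall>\<^sub>F m in sequentially. c (\<psi> m) m < \<epsilon>"
    by (rule back_and_forth)
  have dist_lim: "(\<lambda>n. dist (a n) (b n)) \<longlonglongrightarrow> 0"
    if "\<forall>\<epsilon>>0. \<forall>\<^sub>F n in sequentially. dist (a n) (b n) + dist (a' n) (b' n) < \<epsilon>"
    for a b :: "nat \<Rightarrow> 'x::metric_space" and a' b' :: "nat \<Rightarrow> 'y::metric_space"
    unfolding tendsto_iff
  proof (intro allI impI)
    fix \<epsilon> :: real assume "\<epsilon> > 0"
    with that have "\<forall>\<^sub>F n in sequentially. dist (a n) (b n) + dist (a' n) (b' n) < \<epsilon>" by blast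
    then show "\<forall>\<^sub>F n in sequentially. dist (dist (a n) (b n)) 0 < \<epsilon>"
      by eventually_elim (simp add: dist_real_def, smt (verit) zero_le_dist)
  qed
  have "homeomorphism (I_space X d) (I_space Y e) (I_extension g \<phi> e) (I_extension g' \<psi> d)"
  proof (rule I_extension_homeomorphism[OF hom _ _ \<phi>\<psi>])
    show "\<forall>n\<ge>1. d n \<in> X" "\<forall>m\<ge>1. e m \<in> Y"
      using d e \<open>A \<subseteq> X\<close> \<open>B \<subseteq> Y\<close> unfolding dense_enum_def by auto
    show "(\<lambda>n. dist (d n) (g' (e (\<phi> n)))) \<longlonglongrightarrow> 0"
      using close(1) unfolding c_def by (intro dist_lim)
    show "(\<lambda>m. dist (e m) (g (d (\<psi> m)))) \<longlonglongrightarrow> 0"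
      using close(2) unfolding c_def by (intro dist_lim) (simp add: add.commute)
  qed
  then show ?thesis
    by (rule that) simp
qed

theorem proposition2:
  fixes X A :: "'a::metric_space set" and Y B :: "'b::metric_space set"
    and d :: "nat \<Rightarrow> 'a" and e :: "nat \<Rightarrow> 'b"
  assumes "compact X" and "compact Y"
    and "closed A" and "A \<subseteq> X" and "closed B" and "B \<subseteq> Y"
    and "isolated_points X \<subseteq> A" and "isolated_points Y \<subseteq> B"
    and "dense_enum A d" and "dense_enum B e"
  shows "(\<forall>g g'. homeomorphism X Y g g' \<and> g ` A = B \<longrightarrow>
            (\<exists>F F'. homeomorphism (I_space X d) (I_space Y e) F F' \<and>
                     (\<forall>x\<in>X. F (x, 0) = (g x, 0))))
       \<and> (\<forall>f f'. homeomorphism (I_space X d) (I_space Y e) f f' \<longrightarrow>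
            f ` (X \<times> {0}) = Y \<times> {0} \<and> f ` (A \<times> {0}) = B \<times> {0})"
proof (intro conjI allI impI)
  fix g g' assume "homeomorphism X Y g g' \<and> g ` A = B"
  then have "homeomorphism X Y g g'" "g ` A = B"
    by blast+
  then obtain F F' where "homeomorphism (I_space X d) (I_space Y e) F F'" "\<forall>x\<in>X. F (x, 0) = (g x, 0)"
    by (rule homeomorphism_extends_to_I_space[OF _ _ assms(4,6,9,10)])
  then show "\<exists>F F'. homeomorphism (I_space X d) (I_space Y e) F F' \<and> (\<forall>x\<in>X. F (x, 0) = (g x, 0))"
    by blast
next
  fix f f' assume "homeomorphism (I_space X d) (I_space Y e) f f'"
  from homeomorphism_I_space_base[OF assms(3,4,7,9,5,6,8,10) this]
  show "f ` (X \<times> {0}) = Y \<times> {0}" "f ` (A \<times> {0}) = B \<times> {0}" .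
qed

end
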